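(* Let $N\ge 1$ be an integer and let $W = 1+\sum_{n=1}^\infty w_n\Lambda^{-n}$ be the dressing operator of a solution of the extended lattice Gelfand–Dickey hierarchy of order $N$ (defined in the context). Let $\Psi(s,\boldsymbol{t},\boldsymbol{x},z)$ and $\Psi^*(s,\boldsymbol{t},\boldsymbol{x},z)$ be the associated wave function and dual wave function. Then for every pair $\boldsymbol{\alpha}=(\alpha_k)_{k=1}^\infty$, $\boldsymbol{\beta}=(\beta_k)_{k=1}^\infty$ of arbitrary constants, every independent copy $\boldsymbol{t}'=(t'_k)_{k=1}^\infty$ of the variables $\boldsymbol{t}$, and all $s,s'$ with $m\in\mathbb{Z}_{\ge 0}$ and $(s-s')/\hbar\in\mathbb{Z}_{\ge 0}$, \[ \oint\frac{dz}{2\pi i}\,z^{mN}\, \Psi\big(s - \xi(\boldsymbol{\alpha},z^N),\boldsymbol{t},\boldsymbol{x}+\boldsymbol{\alpha},z\big)\, \Psi^*\big(s' - \xi(\boldsymbol{\beta},z^N),\boldsymbol{t}',\boldsymbol{x}+\boldsymbol{\beta},z\big) = 0, \] where $\xi(\boldsymbol{\alpha},w)=\sum_{k\ge1}\alpha_k w^k$.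
   Context: Let $\hbar$ be a parameter, $s$ a continuous variable, and $\Lambda = e^{\hbar\partial_s}$ the shift operator, $\Lambda f(s) = f(s+\hbar)$. Difference (pseudo-difference) operators are formal sums $\sum_n a_n\Lambda^n$ whose coefficients depend on $\hbar$, $s$, $\boldsymbol{t}=(t_k)_{k\ge1}$, $\boldsymbol{x}=(x_k)_{k\ge1}$; $(\ )_{\ge0}$ and $(\ )_{<0}$ denote the projections $\sum_n a_n\Lambda^n\mapsto\sum_{n\ge0}a_n\Lambda^n$ and $\mapsto\sum_{n<0}a_n\Lambda^n$. A dressing operator $W=1+\sum_{n\ge1}w_n\Lambda^{-n}$ is a solution of the extended lattice Gelfand–Dickey hierarchy of order $N$ if $\mathfrak{L}=W\Lambda^NW^{-1}$ has no negative powers of $\Lambda$ (so $\mathfrak{L}=\Lambda^N+b_1\Lambda^{N-1}+\cdots+b_N$) and $W$ satisfies the Sato equations $\hbar\,\partial W/\partial t_k = B_kW - W\Lambda^k$ with $B_k=(W\Lambda^kW^{-1})_{\ge0}=(\mathfrak{L}^{k/N})_{\ge 0}$, and $\hbar\,\partial W/\partial x_k = \mathfrak{L}^k\hbar\,\partial W/\partial s + P_kW$ with $P_k = -\big(\mathfrak{L}^k\hbar\,(\partial W/\partial s)W^{-1}\big)_{\ge0}$, for $k=1,2,\dots$. Let $\xi(\boldsymbol{t},z)=\sum_{k\ge1}t_kz^k$. The wave function is $\Psi = \big(1+\sum_{n\ge1}w_nz^{-n}\big)z^{s/\hbar}\exp\big(\hbar^{-1}\xi(\boldsymbol{t},z)+\hbar^{-1}\xi(\boldsymbol{x},z^N)\log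 z\big)$, and the dual wave function is $\Psi^* = \big(1+\sum_{n\ge1}w^*_nz^{-n}\big)z^{-s/\hbar}\exp\big(-\hbar^{-1}\xi(\boldsymbol{t},z)-\hbar^{-1}\xi(\boldsymbol{x},z^N)\log z\big)$, where the coefficients $w_n^*$ are defined by $1+\sum_{n\ge1}w^*_n\Lambda^n=\Lambda^{-1}(W^* )^{-1}\Lambda$ with $W^*=1+\sum_{n\ge1}w_n|_{s\to s+n\hbar}\Lambda^n$ the formal adjoint of $W$. Here $z^{a/\hbar}$ means $\exp(\hbar^{-1}a\log z)$; substituting arguments as in the claim affects both the coefficients and these factors, and in the product the $\log z$ factors combine to the integer power $z^{(s-s')/\hbar}$, so the integrand is a formal Laurent series in $z$ (with coefficients formal in $\boldsymbol{\alpha},\boldsymbol{\beta}$). $\oint\frac{dz}{2\pi i}$ denotes the residue, i.e. the coefficient of $z^{-1}$. *)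

theory Defs
  imports "HOL-Analysis.Analysis"
begin

text \<open>A coefficient is a complex-valued function of the continuous variable s and of the
 infinitely many times t = (t_k), x = (x_k) (index k >= 1 is used; t 0, x 0 are spectators).
 The parameter hbar is a fixed nonzero real number, passed explicitly.\<close>

type_synonym coef = "real \<Rightarrow> (nat \<Rightarrow> real) \<Rightarrow> (nat \<Rightarrow> real) \<Rightarrow> complex"

definition czero :: coef where "czero = (\<lambda>_ _ _. 0)"

datatype dir = DS | DT nat | DX nat

definition along :: "dir \<Rightarrow> coef \<Rightarrow> real \<Rightarrow> (nat \<Rightarrow> real) \<Rightarrow> (nat \<Rightarrow> real) \<Rightarrow> real \<Rightarrow> complex" where
  "along d f s t x = (\<lambda>u. case d of DS \<Rightarrow> f u t x | DT k \<Rightarrow> f s (t(k := u)) x | DX k \<Rightarrow> f s t (x(k := u)))"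

definition coord :: "dir \<Rightarrow> real \<Rightarrow> (nat \<Rightarrow> real) \<Rightarrow> (nat \<Rightarrow> real) \<Rightarrow> real" where
  "coord d s t x = (case d of DS \<Rightarrow> s | DT k \<Rightarrow> t k | DX k \<Rightarrow> x k)"

definition partial :: "dir \<Rightarrow> coef \<Rightarrow> coef" where
  "partial d f = (\<lambda>s t x. vector_derivative (along d f s t x) (at (coord d s t x)))"

definition smooth :: "coef \<Rightarrow> bool" where
  "smooth f \<longleftrightarrow> (\<forall>ds d s t x. along d (fold partial ds f) s t x differentiable (at (coord d s t x)))"

section \<open>Pseudo-difference operators  sum_n a_n Lambda^n,  Lambda f(s) = f(s + hbar)\<close>

type_synonym pdo = "int \<Rightarrow> coef"

definition bdd_above_op :: "pdo \<Rightarrow> bool" where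
  "bdd_above_op A \<longleftrightarrow> (\<exists>M. \<forall>k>M. A k = czero)"

definition bdd_below_op :: "pdo \<Rightarrow> bool" where
  "bdd_below_op A \<longleftrightarrow> (\<exists>M. \<forall>k<M. A k = czero)"

text \<open>(a_i Lambda^i)(b_j Lambda^j) = a_i b_j(s + i hbar) Lambda^(i+j); the sum is finite whenever
 both factors are bounded above, or both bounded below.\<close>
definition op_mult :: "real \<Rightarrow> pdo \<Rightarrow> pdo \<Rightarrow> pdo" where
  "op_mult h A B = (\<lambda>k s t x. \<Sum>i\<in>{i. A i \<noteq> czero \<and> B (k - i) \<noteq> czero}.
       A i s t x * B (k - i) (s + of_int i * h) t x)"

definition Lam :: "int \<Rightarrow> pdo" where
  "Lam n = (\<lambda>k. if k = n then (\<lambda>_ _ _. 1) else czero)"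

definition op_add :: "pdo \<Rightarrow> pdo \<Rightarrow> pdo" where
  "op_add A B = (\<lambda>k s t x. A k s t x + B k s t x)"

definition op_sub :: "pdo \<Rightarrow> pdo \<Rightarrow> pdo" where
  "op_sub A B = (\<lambda>k s t x. A k s t x - B k s t x)"

definition op_scale :: "real \<Rightarrow> pdo \<Rightarrow> pdo" where
  "op_scale c A = (\<lambda>k s t x. of_real c * A k s t x)"

definition op_pos :: "pdo \<Rightarrow> pdo" where
  "op_pos A = (\<lambda>k. if k \<ge> 0 then A k else czero)"

definition op_pow :: "real \<Rightarrow> pdo \<Rightarrow> nat \<Rightarrow> pdo" where
  "op_pow h A n = (op_mult h A ^^ n) (Lam 0)"

definition op_partial :: "dir \<Rightarrow> pdo \<Rightarrow> pdo" where
  "op_partial d A = (\<lambda>k. partial d (A k))"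

definition inv_above :: "real \<Rightarrow> pdo \<Rightarrow> pdo" where
  "inv_above h A = (THE B. bdd_above_op B \<and> op_mult h A B = Lam 0 \<and> op_mult h B A = Lam 0)"

definition inv_below :: "real \<Rightarrow> pdo \<Rightarrow> pdo" where
  "inv_below h A = (THE B. bdd_below_op B \<and> op_mult h A B = Lam 0 \<and> op_mult h B A = Lam 0)"

text \<open>Formal adjoint: (a_n Lambda^n)^* = Lambda^(-n) a_n = a_n(s - n hbar) Lambda^(-n).\<close>
definition adj :: "real \<Rightarrow> pdo \<Rightarrow> pdo" where
  "adj h A = (\<lambda>k s t x. A (- k) (s + of_int k * h) t x)"

definition dressing_op :: "pdo \<Rightarrow> bool" where
  "dressing_op W \<longleftrightarrow> W 0 = (\<lambda>_ _ _. 1) \<and> (\<forall>k>0. W k = czero)"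

definition GD_L :: "real \<Rightarrow> nat \<Rightarrow> pdo \<Rightarrow> pdo" where
  "GD_L h N W = op_mult h (op_mult h W (Lam (int N))) (inv_above h W)"

definition GD_B :: "real \<Rightarrow> nat \<Rightarrow> pdo \<Rightarrow> pdo" where
  "GD_B h k W = op_pos (op_mult h (op_mult h W (Lam (int k))) (inv_above h W))"

definition GD_P :: "real \<Rightarrow> nat \<Rightarrow> nat \<Rightarrow> pdo \<Rightarrow> pdo" where
  "GD_P h N k W = op_scale (-1) (op_pos (op_mult h
      (op_mult h (op_pow h (GD_L h N W) k) (op_scale h (op_partial DS W))) (inv_above h W)))"

definition lattice_GD_solution :: "real \<Rightarrow> nat \<Rightarrow> pdo \<Rightarrow> bool" where
  "lattice_GD_solution h N W \<longleftrightarrow>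
     dressing_op W \<and> (\<forall>k. smooth (W k)) \<and>
     (\<forall>k<0. GD_L h N W k = czero) \<and>
     (\<forall>k\<ge>1. op_scale h (op_partial (DT k) W)
              = op_sub (op_mult h (GD_B h k W) W) (op_mult h W (Lam (int k)))) \<and>
     (\<forall>k\<ge>1. op_scale h (op_partial (DX k) W)
              = op_add (op_mult h (op_pow h (GD_L h N W) k) (op_scale h (op_partial DS W)))
                       (op_mult h (GD_P h N k W) W))"

text \<open>A z-series  sum_j F j z^j  with coefficient functions.  The non-exponential part of Psi is
 1 + sum_n w_n z^(-n), i.e. coefficient of z^j is W j.  The dual coefficients w*_n are the
 coefficients of Lambda^(-1) (W^*)^(-1) Lambda; the non-exponential part of Psi^* is
 1 + sum_n w*_n z^(-n).\<close>

definition wave_series :: "pdo \<Rightarrow> int \<Rightarrow> coef" where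
  "wave_series W = W"

definition dual_coeffs :: "real \<Rightarrow> pdo \<Rightarrow> pdo" where
  "dual_coeffs h W = op_mult h (op_mult h (Lam (-1)) (inv_below h (adj h W))) (Lam 1)"

definition dual_wave_series :: "real \<Rightarrow> pdo \<Rightarrow> int \<Rightarrow> coef" where
  "dual_wave_series h W = (\<lambda>j. dual_coeffs h W (- j))"

text \<open>Formal expansion in the constants alpha (resp. beta) and in y = t' - t.
 The integrand is a formal power series in alpha, beta, y; its Taylor coefficients are obtained
 by the derivations d/d alpha_k, d/d beta_k, d/d y_k at 0.  By the chain rule, on
 F(s - xi(alpha, z^N), t, x + alpha; z) the derivation d/d alpha_k acts as
 d/dx_k - z^(N k) d/ds, and on exp(-xi(y,z)/hbar) G(t + y; z) the derivation d/d y_k acts as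
 d/dt_k - z^k/hbar.  (The z^(s/hbar), log z factors cancel as stated in the context.)\<close>

definition d_alpha :: "nat \<Rightarrow> nat \<Rightarrow> (int \<Rightarrow> coef) \<Rightarrow> (int \<Rightarrow> coef)" where
  "d_alpha N k F = (\<lambda>j s t x. partial (DX k) (F j) s t x - partial DS (F (j - int (N * k))) s t x)"

definition d_y :: "real \<Rightarrow> nat \<Rightarrow> (int \<Rightarrow> coef) \<Rightarrow> (int \<Rightarrow> coef)" where
  "d_y h k F = (\<lambda>j s t x. partial (DT k) (F j) s t x - of_real (1 / h) * F (j - int k) s t x)"

text \<open>Residue (coefficient of z^(-1)) of z^c A(z) B(z) for z-Laurent series A, B.\<close>
definition res_prod :: "int \<Rightarrow> (int \<Rightarrow> complex) \<Rightarrow> (int \<Rightarrow> complex) \<Rightarrow> complex" where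
  "res_prod c A B = (\<Sum>i\<in>{i. A i \<noteq> 0 \<and> B (- 1 - c - i) \<noteq> 0}. A i * B (- 1 - c - i))"

end

theory Submission
  imports Defs "HOL-Library.Groups_Big_Fun"
begin

text \<open>The Taylor coefficients (in \<open>\<alpha>\<close>, \<open>\<beta>\<close>, \<open>t' - t\<close>) of the wave function have the z-coefficients
  of an operator \<open>Q W\<close>, and those of the dual wave function the shifted coefficients of
  \<open>W\<^sup>-\<^sup>1 R\<close>, where \<open>Q\<close>, \<open>R\<close> are difference operators (no negative powers of \<open>\<Lambda>\<close>): through the Sato
  equations the derivations \<open>\<partial>/\<partial>x\<^sub>k - z\<^sup>N\<^sup>k \<partial>/\<partial>s\<close> and \<open>\<partial>/\<partial>t\<^sub>k - z\<^sup>k/\<hbar>\<close> only multiply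
  \<open>Q\<close>, \<open>R\<close> by derivatives and by the difference operators \<open>\<LL>\<^sup>k\<close>, \<open>B\<^sub>k\<close>, \<open>P\<^sub>k\<close>.
  The residue of \<open>z\<^sup>m\<^sup>N\<^sup>+\<^sup>l \<Psi> \<Psi>\<^sup>*\<close> is then the coefficient of \<open>\<Lambda>\<^sup>-\<^sup>1\<^sup>-\<^sup>l\<close> in
  \<open>Q W \<Lambda>\<^sup>m\<^sup>N W\<^sup>-\<^sup>1 R = Q \<LL>\<^sup>m R\<close>, again a difference operator, so it vanishes.\<close>

section \<open>Smooth coefficients\<close>

definition shift_coef :: "real \<Rightarrow> coef \<Rightarrow> coef" where
  "shift_coef c f = (\<lambda>s t x. f (s + c) t x)"

definition differentiable_coef :: "coef \<Rightarrow> bool" where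
  "differentiable_coef f \<longleftrightarrow> (\<forall>d s t x. along d f s t x differentiable (at (coord d s t x)))"

lemma has_vector_derivative_shift:
  fixes g :: "real \<Rightarrow> complex"
  assumes "(g has_vector_derivative D) (at (a + c))"
  shows "((\<lambda>u. g (u + c)) has_vector_derivative D) (at a)"
proof -
  have "((\<lambda>u. u + c) has_vector_derivative 1) (at a)"
    by (auto intro!: derivative_eq_intros)
  from vector_diff_chain_at[OF this, of g D] assms show ?thesis by (simp add: o_def)
qed

lemma vector_derivative_shift:
  fixes g :: "real \<Rightarrow> complex"
  shows "vector_derivative (\<lambda>u. g (u + c)) (at a) = vector_derivative g (at (a + c))"
proof -
  have "((\<lambda>u. g (u + c)) has_vector_derivative D) (at a) \<longleftrightarrow> (g has_vector_derivative D) (at (a + c))"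
    for D
    using has_vector_derivative_shift[of "\<lambda>u. g (u + c)" D "a + c" "- c"]
      has_vector_derivative_shift[of g D a c]
    by auto
  then show ?thesis unfolding vector_derivative_def by simp
qed

lemma differentiable_shift:
  fixes g :: "real \<Rightarrow> complex"
  assumes "g differentiable (at (a + c))"
  shows "(\<lambda>u. g (u + c)) differentiable (at a)"
  using has_vector_derivative_shift assms differentiableI_vector vector_derivative_works by blast

lemma along_add: "along d (\<lambda>s t x. f s t x + g s t x) s t x = (\<lambda>u. along d f s t x u + along d g s t x u)"
  by (cases d) (auto simp: along_def)

lemma along_mult: "along d (\<lambda>s t x. f s t x * g s t x) s t x = (\<lambda>u. along d f s t x u * along d g s t x u)"
  by (cases d) (auto simp: along_def)

lemma along_const: "along d (\<lambda>s t x. c) s t x = (\<lambda>u. c)"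
  by (cases d) (auto simp: along_def)

lemma along_at_coord: "along d f s t x (coord d s t x) = f s t x"
  by (cases d) (simp_all add: along_def coord_def)

lemma partial_add:
  assumes "differentiable_coef f" "differentiable_coef g"
  shows "partial d (\<lambda>s t x. f s t x + g s t x) = (\<lambda>s t x. partial d f s t x + partial d g s t x)"
  using assms unfolding partial_def differentiable_coef_def along_add by (auto intro!: ext)

lemma partial_mult:
  assumes "differentiable_coef f" "differentiable_coef g"
  shows "partial d (\<lambda>s t x. f s t x * g s t x)
       = (\<lambda>s t x. partial d f s t x * g s t x + f s t x * partial d g s t x)"
  using assms unfolding partial_def differentiable_coef_def along_mult
  by (auto simp: along_at_coord intro!: ext)

lemma partial_const: "partial d (\<lambda>s t x. c) = (\<lambda>s t x. 0)"
  unfolding partial_def along_const by simp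

lemma partial_czero: "partial d czero = czero"
  using partial_const[of d 0] by (simp add: czero_def)

lemma partial_shift_coef: "partial d (shift_coef c f) = shift_coef c (partial d f)"
proof (intro ext)
  fix s t x
  show "partial d (shift_coef c f) s t x = shift_coef c (partial d f) s t x"
    using vector_derivative_shift[of "\<lambda>u. f u t x" c s]
    by (cases d) (auto simp: partial_def shift_coef_def along_def coord_def)
qed

lemma differentiable_coef_shift:
  assumes "differentiable_coef f"
  shows "differentiable_coef (shift_coef c f)"
  unfolding differentiable_coef_def
proof (intro allI)
  fix d s t x
  have f: "along d f (s + c) t x differentiable at (coord d (s + c) t x)"
    using assms unfolding differentiable_coef_def by blast
  show "along d (shift_coef c f) s t x differentiable at (coord d s t x)"
  proof (cases d)
    case DS
    then show ?thesis
      using differentiable_shift[of "\<lambda>u. f u t x" s c] f by (simp add: along_def coord_def shift_coef_def)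
  qed (use f in \<open>simp_all add: along_def coord_def shift_coef_def\<close>)
qed

text \<open>The algebra generated by the smooth functions and closed under shifts is closed under every
  partial derivative, hence consists of smooth functions.\<close>

inductive_set smooth_closure :: "coef set" where
  smooth: "smooth f \<Longrightarrow> f \<in> smooth_closure"
| const: "(\<lambda>s t x. c) \<in> smooth_closure"
| add: "f \<in> smooth_closure \<Longrightarrow> g \<in> smooth_closure \<Longrightarrow> (\<lambda>s t x. f s t x + g s t x) \<in> smooth_closure"
| mult: "f \<in> smooth_closure \<Longrightarrow> g \<in> smooth_closure \<Longrightarrow> (\<lambda>s t x. f s t x * g s t x) \<in> smooth_closure"
| shift: "f \<in> smooth_closure \<Longrightarrow> shift_coef c f \<in> smooth_closure"

lemma smooth_differentiable_coef: "smooth f \<Longrightarrow> differentiable_coef f"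
  unfolding smooth_def differentiable_coef_def by (metis fold_Nil id_apply)

lemma smooth_partial: "smooth f \<Longrightarrow> smooth (partial d f)"
  unfolding smooth_def by (metis fold_Cons o_apply)

lemma smooth_closure_partial:
  "f \<in> smooth_closure \<Longrightarrow> differentiable_coef f \<and> (\<forall>d. partial d f \<in> smooth_closure)"
proof (induction rule: smooth_closure.induct)
  case (smooth f)
  then show ?case by (auto intro: smooth_differentiable_coef smooth_closure.smooth smooth_partial)
next
  case (const c)
  then show ?case
    by (auto simp: differentiable_coef_def along_const partial_const intro: smooth_closure.const)
next
  case (add f g)
  then show ?case
    by (auto simp: partial_add intro!: smooth_closure.add)
      (auto simp: differentiable_coef_def along_add)
next
  case (mult f g)
  then show ?case
    by (auto simp: partial_mult intro!: smooth_closure.add smooth_closure.mult)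
      (auto simp: differentiable_coef_def along_mult)
next
  case (shift f c)
  then show ?case
    by (auto simp: partial_shift_coef differentiable_coef_shift intro: smooth_closure.shift)
qed

lemma smooth_closure_eq: "f \<in> smooth_closure \<longleftrightarrow> smooth f"
proof
  assume "f \<in> smooth_closure"
  then have "fold partial ds f \<in> smooth_closure" for ds
    by (induction ds arbitrary: f) (auto dest: smooth_closure_partial)
  then show "smooth f"
    unfolding smooth_def using smooth_closure_partial differentiable_coef_def by blast
qed (rule smooth_closure.smooth)

lemma smooth_add: "smooth f \<Longrightarrow> smooth g \<Longrightarrow> smooth (\<lambda>s t x. f s t x + g s t x)"
  by (simp add: smooth_closure_eq[symmetric] smooth_closure.add)

lemma smooth_mult: "smooth f \<Longrightarrow> smooth g \<Longrightarrow> smooth (\<lambda>s t x. f s t x * g s t x)"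
  by (simp add: smooth_closure_eq[symmetric] smooth_closure.mult)

lemma smooth_const: "smooth (\<lambda>s t x. c)"
  by (simp add: smooth_closure_eq[symmetric] smooth_closure.const)

lemma smooth_shift: "smooth f \<Longrightarrow> smooth (\<lambda>s t x. f (s + c) t x)"
  using smooth_closure.shift[of f c] by (simp add: smooth_closure_eq shift_coef_def)

lemma smooth_czero: "smooth czero"
  using smooth_const[of 0] by (simp add: czero_def)

lemma smooth_cmult: "smooth f \<Longrightarrow> smooth (\<lambda>s t x. c * f s t x)"
  using smooth_mult[OF smooth_const] by blast

lemma smooth_neg: "smooth f \<Longrightarrow> smooth (\<lambda>s t x. - f s t x)"
  using smooth_cmult[of f "-1"] by simp

lemma smooth_diff: "smooth f \<Longrightarrow> smooth g \<Longrightarrow> smooth (\<lambda>s t x. f s t x - g s t x)"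
  using smooth_add[OF _ smooth_neg, of f g] by simp

lemma smooth_sum: "(\<And>i. i \<in> S \<Longrightarrow> smooth (F i)) \<Longrightarrow> smooth (\<lambda>s t x. \<Sum>i\<in>S. F i s t x)"
  by (induction S rule: infinite_finite_induct) (simp_all add: smooth_const smooth_add)

lemma partial_sum:
  assumes "\<And>i. i \<in> S \<Longrightarrow> smooth (F i)"
  shows "partial d (\<lambda>s t x. \<Sum>i\<in>S. F i s t x) = (\<lambda>s t x. \<Sum>i\<in>S. partial d (F i) s t x)"
  using assms
proof (induction S rule: infinite_finite_induct)
  case (insert a A)
  have "partial d (\<lambda>s t x. F a s t x + (\<Sum>i\<in>A. F i s t x))
      = (\<lambda>s t x. partial d (F a) s t x + partial d (\<lambda>s t x. \<Sum>i\<in>A. F i s t x) s t x)"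
    by (rule partial_add) (auto intro!: smooth_differentiable_coef smooth_sum insert.prems)
  then show ?case using insert by simp
qed (simp_all add: partial_const)


section \<open>The algebra of operators bounded above\<close>

definition deg_bound :: "pdo \<Rightarrow> int" where
  "deg_bound A = (SOME M. \<forall>k>M. A k = czero)"

lemma coeff_above_deg_bound:
  assumes "bdd_above_op A" "k > deg_bound A"
  shows "A k = czero"
proof -
  have "\<forall>k>deg_bound A. A k = czero"
    using assms(1) unfolding bdd_above_op_def deg_bound_def by (rule someI_ex)
  then show ?thesis using assms(2) by blast
qed

lemma nonzero_coeff_le_deg_bound: "bdd_above_op A \<Longrightarrow> A k s t x \<noteq> 0 \<Longrightarrow> k \<le> deg_bound A"
  using coeff_above_deg_bound[of A k] by (force simp: czero_def)

lemma op_mult_eq_sum: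
  assumes "finite S" "\<And>i. i \<notin> S \<Longrightarrow> A i = czero \<or> B (k - i) = czero"
  shows "op_mult h A B k s t x = (\<Sum>i\<in>S. A i s t x * B (k - i) (s + of_int i * h) t x)"
  unfolding op_mult_def
  by (rule sum.mono_neutral_left) (use assms in \<open>auto simp: czero_def\<close>)

lemma op_mult_eq_sum_interval:
  assumes "\<And>i. i > MA \<Longrightarrow> A i = czero" "\<And>j. j > MB \<Longrightarrow> B j = czero" "lo \<le> k - MB" "MA \<le> hi"
  shows "op_mult h A B k s t x = (\<Sum>i\<in>{lo..hi}. A i s t x * B (k - i) (s + of_int i * h) t x)"
  by (rule op_mult_eq_sum) (use assms in \<open>auto simp: not_le\<close>)

lemma op_mult_eq_sum_deg_bound:
  assumes "bdd_above_op A" "bdd_above_op B"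
  shows "op_mult h A B k s t x
       = (\<Sum>i\<in>{k - deg_bound B..deg_bound A}. A i s t x * B (k - i) (s + of_int i * h) t x)"
  by (rule op_mult_eq_sum_interval[of "deg_bound A" _ "deg_bound B"])
    (auto intro: coeff_above_deg_bound assms)

lemma op_mult_support_subset:
  assumes "bdd_above_op A" "bdd_above_op B"
  shows "{i. A i s t x * B (k - i) (s' i) t x \<noteq> 0} \<subseteq> {k - deg_bound B..deg_bound A}"
  using nonzero_coeff_le_deg_bound[OF assms(1)] nonzero_coeff_le_deg_bound[OF assms(2)]
  by fastforce

lemma finite_op_mult_support:
  assumes "bdd_above_op A" "bdd_above_op B"
  shows "finite {i. A i s t x * B (k - i) (s' i) t x \<noteq> 0}"
  using op_mult_support_subset[OF assms] by (rule finite_subset) simp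

lemma op_mult_eq_Sum_any:
  assumes "bdd_above_op A" "bdd_above_op B"
  shows "op_mult h A B k s t x = Sum_any (\<lambda>i. A i s t x * B (k - i) (s + of_int i * h) t x)"
  unfolding op_mult_eq_sum_deg_bound[OF assms]
  by (rule Sum_any.expand_superset[symmetric]) (use op_mult_support_subset[OF assms, of s t x k "\<lambda>i. s + of_int i * h"] in auto)

lemma op_mult_above_deg_bound:
  assumes "bdd_above_op A" "bdd_above_op B" "k > deg_bound A + deg_bound B"
  shows "op_mult h A B k = czero"
proof -
  have "A i = czero \<or> B (k - i) = czero" for i
    using coeff_above_deg_bound[OF assms(1), of i] coeff_above_deg_bound[OF assms(2), of "k - i"] assms(3)
    by linarith
  then have S: "{i. A i \<noteq> czero \<and> B (k - i) \<noteq> czero} = {}" by blast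
  show ?thesis unfolding op_mult_def S by (simp add: czero_def)
qed

lemma bdd_above_op_mult: "bdd_above_op A \<Longrightarrow> bdd_above_op B \<Longrightarrow> bdd_above_op (op_mult h A B)"
  unfolding bdd_above_op_def[of "op_mult h A B"] using op_mult_above_deg_bound by blast

lemma bdd_above_op_add: "bdd_above_op A \<Longrightarrow> bdd_above_op B \<Longrightarrow> bdd_above_op (op_add A B)"
  unfolding bdd_above_op_def op_add_def czero_def
  by (metis (no_types, lifting) add_0 max.strict_boundedE)

lemma bdd_above_op_sub: "bdd_above_op A \<Longrightarrow> bdd_above_op B \<Longrightarrow> bdd_above_op (op_sub A B)"
  unfolding bdd_above_op_def op_sub_def czero_def
  by (metis (no_types, lifting) diff_0_right max.strict_boundedE)

lemma bdd_above_op_scale: "bdd_above_op A \<Longrightarrow> bdd_above_op (op_scale c A)"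
  unfolding bdd_above_op_def op_scale_def czero_def by (metis mult_zero_right)

lemma bdd_above_op_pos: "bdd_above_op A \<Longrightarrow> bdd_above_op (op_pos A)"
  unfolding bdd_above_op_def op_pos_def by auto

lemma bdd_above_op_partial: "bdd_above_op A \<Longrightarrow> bdd_above_op (op_partial d A)"
  unfolding bdd_above_op_def op_partial_def by (metis partial_czero)

lemma bdd_above_op_Lam: "bdd_above_op (Lam n)"
  unfolding bdd_above_op_def Lam_def by auto

lemma one_coef_neq_czero: "(\<lambda>_ _ _. 1::complex) \<noteq> czero"
  unfolding czero_def by (metis zero_neq_one)

lemma op_mult_Lam_right: "op_mult h A (Lam n) k = A (k - n)"
proof (intro ext)
  fix s t x
  have "{i. A i \<noteq> czero \<and> Lam n (k - i) \<noteq> czero} = (if A (k - n) \<noteq> czero then {k - n} else {})"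
    using one_coef_neq_czero by (auto simp: Lam_def)
  then show "op_mult h A (Lam n) k s t x = A (k - n) s t x"
    unfolding op_mult_def by (auto simp: Lam_def czero_def)
qed

lemma op_mult_Lam_left: "op_mult h (Lam n) A k s t x = A (k - n) (s + of_int n * h) t x"
proof -
  have "{i. Lam n i \<noteq> czero \<and> A (k - i) \<noteq> czero} = (if A (k - n) \<noteq> czero then {n} else {})"
    using one_coef_neq_czero by (auto simp: Lam_def)
  then show ?thesis
    unfolding op_mult_def by (auto simp: Lam_def czero_def)
qed

lemma op_mult_Lam0_left [simp]: "op_mult h (Lam 0) A = A"
  by (intro ext) (simp add: op_mult_Lam_left)

lemma op_mult_Lam0_right [simp]: "op_mult h A (Lam 0) = A"
  by (intro ext) (simp add: op_mult_Lam_right)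

lemma op_mult_Lam_Lam: "op_mult h (Lam a) (Lam b) = Lam (a + b)"
proof (rule ext)
  fix k
  show "op_mult h (Lam a) (Lam b) k = Lam (a + b) k"
    unfolding op_mult_Lam_right by (auto simp: Lam_def)
qed

lemma op_mult_assoc:
  assumes A: "bdd_above_op A" and B: "bdd_above_op B" and C: "bdd_above_op C"
  shows "op_mult h (op_mult h A B) C = op_mult h A (op_mult h B C)"
proof (intro ext)
  fix k s t x
  define g where
    "g i j = A i s t x * B (j - i) (s + of_int i * h) t x * C (k - j) (s + of_int j * h) t x" for i j
  have AB: "bdd_above_op (op_mult h A B)" and BC: "bdd_above_op (op_mult h B C)"
    using A B C by (auto intro: bdd_above_op_mult)
  have "op_mult h (op_mult h A B) C k s t x = Sum_any (\<lambda>j. Sum_any (\<lambda>i. g i j))"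
    unfolding op_mult_eq_Sum_any[OF AB C] op_mult_eq_Sum_any[OF A B] g_def
    by (intro Sum_any.cong Sum_any_left_distrib finite_op_mult_support[OF A B])
  also have "\<dots> = Sum_any (\<lambda>i. Sum_any (\<lambda>j. g i j))"
  proof (rule Sum_any.swap[symmetric])
    let ?box = "{k - deg_bound C - deg_bound B..deg_bound A} \<times> {k - deg_bound C..deg_bound A + deg_bound B}"
    show "finite ?box" by simp
    have "i \<le> deg_bound A \<and> j - i \<le> deg_bound B \<and> k - j \<le> deg_bound C" if "g i j \<noteq> 0" for i j
      using that nonzero_coeff_le_deg_bound[OF A] nonzero_coeff_le_deg_bound[OF B]
        nonzero_coeff_le_deg_bound[OF C]
      unfolding g_def by (metis mult_eq_0_iff)
    then show "{a. \<exists>b. g a b \<noteq> 0} \<times> {b. \<exists>a. g a b \<noteq> 0} \<subseteq> ?box"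
      by fastforce
  qed
  also have "\<dots> = Sum_any (\<lambda>i. A i s t x * op_mult h B C (k - i) (s + of_int i * h) t x)"
  proof (rule Sum_any.cong)
    fix i
    have "Sum_any (\<lambda>j. g i j) = Sum_any (\<lambda>j. g i (j + i))"
      by (rule Sum_any.reindex_cong[of "\<lambda>j. j + i"]) (auto simp: bij_plus_right)
    also have "\<dots> = A i s t x * Sum_any (\<lambda>j. B j (s + of_int i * h) t x
                      * C (k - i - j) (s + of_int i * h + of_int j * h) t x)"
      unfolding g_def Sum_any_right_distrib[OF finite_op_mult_support[OF B C]]
      by (intro Sum_any.cong) (simp add: algebra_simps)
    finally show "Sum_any (\<lambda>j. g i j) = A i s t x * op_mult h B C (k - i) (s + of_int i * h) t x"
      by (simp only: op_mult_eq_Sum_any[OF B C])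
  qed
  also have "\<dots> = op_mult h A (op_mult h B C) k s t x"
    by (rule op_mult_eq_Sum_any[OF A BC, symmetric])
  finally show "op_mult h (op_mult h A B) C k s t x = op_mult h A (op_mult h B C) k s t x" .
qed

lemma op_mult_add_left:
  assumes A: "bdd_above_op A" and B: "bdd_above_op B" and C: "bdd_above_op C"
  shows "op_mult h (op_add A B) C = op_add (op_mult h A C) (op_mult h B C)"
proof (intro ext)
  fix k s t x
  let ?S = "{k - deg_bound C..max (deg_bound A) (deg_bound B)}"
  let ?f = "\<lambda>A i. A i s t x * C (k - i) (s + of_int i * h) t x"
  have "op_mult h (op_add A B) C k s t x = (\<Sum>i\<in>?S. ?f (op_add A B) i)"
    by (rule op_mult_eq_sum_interval[of "max (deg_bound A) (deg_bound B)" _ "deg_bound C"])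
      (use coeff_above_deg_bound[OF A] coeff_above_deg_bound[OF B] coeff_above_deg_bound[OF C]
        in \<open>auto simp: op_add_def czero_def\<close>)
  moreover have "op_mult h A C k s t x = (\<Sum>i\<in>?S. ?f A i)" "op_mult h B C k s t x = (\<Sum>i\<in>?S. ?f B i)"
    by (rule op_mult_eq_sum_interval,
        use coeff_above_deg_bound[OF A] coeff_above_deg_bound[OF B] coeff_above_deg_bound[OF C]
        in auto)+
  ultimately show "op_mult h (op_add A B) C k s t x = op_add (op_mult h A C) (op_mult h B C) k s t x"
    by (simp add: op_add_def distrib_right sum.distrib)
qed

lemma op_mult_add_right:
  assumes A: "bdd_above_op A" and B: "bdd_above_op B" and C: "bdd_above_op C"
  shows "op_mult h A (op_add B C) = op_add (op_mult h A B) (op_mult h A C)"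
proof (intro ext)
  fix k s t x
  let ?S = "{k - max (deg_bound B) (deg_bound C)..deg_bound A}"
  let ?f = "\<lambda>B i. A i s t x * B (k - i) (s + of_int i * h) t x"
  have "op_mult h A (op_add B C) k s t x = (\<Sum>i\<in>?S. ?f (op_add B C) i)"
    by (rule op_mult_eq_sum_interval[of "deg_bound A" _ "max (deg_bound B) (deg_bound C)"])
      (use coeff_above_deg_bound[OF A] coeff_above_deg_bound[OF B] coeff_above_deg_bound[OF C]
        in \<open>auto simp: op_add_def czero_def\<close>)
  moreover have "op_mult h A B k s t x = (\<Sum>i\<in>?S. ?f B i)" "op_mult h A C k s t x = (\<Sum>i\<in>?S. ?f C i)"
    by (rule op_mult_eq_sum_interval,
        use coeff_above_deg_bound[OF A] coeff_above_deg_bound[OF B] coeff_above_deg_bound[OF C]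
        in auto)+
  ultimately show "op_mult h A (op_add B C) k s t x = op_add (op_mult h A B) (op_mult h A C) k s t x"
    by (simp add: op_add_def distrib_left sum.distrib)
qed

lemma op_mult_scale_left:
  assumes A: "bdd_above_op A" and B: "bdd_above_op B"
  shows "op_mult h (op_scale c A) B = op_scale c (op_mult h A B)"
proof (intro ext)
  fix k s t x
  have "op_mult h (op_scale c A) B k s t x
      = (\<Sum>i\<in>{k - deg_bound B..deg_bound A}. op_scale c A i s t x * B (k - i) (s + of_int i * h) t x)"
    by (rule op_mult_eq_sum_interval[of "deg_bound A" _ "deg_bound B"])
      (use coeff_above_deg_bound[OF A] coeff_above_deg_bound[OF B] in \<open>auto simp: op_scale_def czero_def\<close>)
  then show "op_mult h (op_scale c A) B k s t x = op_scale c (op_mult h A B) k s t x"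
    by (simp add: op_mult_eq_sum_deg_bound[OF A B] op_scale_def sum_distrib_left mult.assoc)
qed

lemma op_mult_scale_right:
  assumes A: "bdd_above_op A" and B: "bdd_above_op B"
  shows "op_mult h A (op_scale c B) = op_scale c (op_mult h A B)"
proof (intro ext)
  fix k s t x
  have "op_mult h A (op_scale c B) k s t x
      = (\<Sum>i\<in>{k - deg_bound B..deg_bound A}. A i s t x * op_scale c B (k - i) (s + of_int i * h) t x)"
    by (rule op_mult_eq_sum_interval[of "deg_bound A" _ "deg_bound B"])
      (use coeff_above_deg_bound[OF A] coeff_above_deg_bound[OF B] in \<open>auto simp: op_scale_def czero_def\<close>)
  then show "op_mult h A (op_scale c B) k s t x = op_scale c (op_mult h A B) k s t x"
    by (simp add: op_mult_eq_sum_deg_bound[OF A B] op_scale_def sum_distrib_left mult.left_commute)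
qed

lemma op_scale_eq_iff: "c \<noteq> 0 \<Longrightarrow> op_scale c X = Y \<longleftrightarrow> X = op_scale (1 / c) Y"
  by (auto simp: op_scale_def fun_eq_iff field_simps)

lemma op_sub_eq_add_scale: "op_sub A B = op_add A (op_scale (-1) B)"
  by (simp add: op_sub_def op_add_def op_scale_def)

lemma op_mult_sub_left:
  assumes "bdd_above_op A" "bdd_above_op B" "bdd_above_op C"
  shows "op_mult h (op_sub A B) C = op_sub (op_mult h A C) (op_mult h B C)"
  using assms
  by (simp add: op_sub_eq_add_scale op_mult_add_left op_mult_scale_left bdd_above_op_scale)

lemma op_mult_sub_right:
  assumes "bdd_above_op A" "bdd_above_op B" "bdd_above_op C"
  shows "op_mult h A (op_sub B C) = op_sub (op_mult h A B) (op_mult h A C)"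
  using assms
  by (simp add: op_sub_eq_add_scale op_mult_add_right op_mult_scale_right bdd_above_op_scale)

section \<open>Smooth operators and difference operators\<close>

definition smooth_op :: "pdo \<Rightarrow> bool" where
  "smooth_op A \<longleftrightarrow> bdd_above_op A \<and> (\<forall>k. smooth (A k))"

definition difference_op :: "pdo \<Rightarrow> bool" where
  "difference_op A \<longleftrightarrow> (\<forall>k<0. A k = czero)"

lemma smooth_op_bdd_above: "smooth_op A \<Longrightarrow> bdd_above_op A"
  by (simp add: smooth_op_def)

lemma smooth_op_coeff: "smooth_op A \<Longrightarrow> smooth (A k)"
  by (simp add: smooth_op_def)

lemma smooth_op_mult: "smooth_op A \<Longrightarrow> smooth_op B \<Longrightarrow> smooth_op (op_mult h A B)"
proof -
  assume A: "smooth_op A" and B: "smooth_op B"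
  have "op_mult h A B k = (\<lambda>s t x. \<Sum>i\<in>{k - deg_bound B..deg_bound A}.
          A i s t x * B (k - i) (s + of_int i * h) t x)" for k
    by (intro ext op_mult_eq_sum_deg_bound smooth_op_bdd_above A B)
  moreover have "smooth (\<lambda>s t x. \<Sum>i\<in>{k - deg_bound B..deg_bound A}.
          A i s t x * B (k - i) (s + of_int i * h) t x)" for k
    by (intro smooth_sum smooth_mult smooth_shift smooth_op_coeff[OF A] smooth_op_coeff[OF B])
  ultimately show ?thesis
    using A B by (simp add: smooth_op_def bdd_above_op_mult)
qed

lemma smooth_op_add: "smooth_op A \<Longrightarrow> smooth_op B \<Longrightarrow> smooth_op (op_add A B)"
  unfolding smooth_op_def by (auto intro: bdd_above_op_add) (auto simp: op_add_def intro!: smooth_add)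

lemma smooth_op_sub: "smooth_op A \<Longrightarrow> smooth_op B \<Longrightarrow> smooth_op (op_sub A B)"
  unfolding smooth_op_def by (auto intro: bdd_above_op_sub) (auto simp: op_sub_def intro!: smooth_diff)

lemma smooth_op_scale: "smooth_op A \<Longrightarrow> smooth_op (op_scale c A)"
  unfolding smooth_op_def by (auto intro: bdd_above_op_scale) (auto simp: op_scale_def intro!: smooth_cmult)

lemma smooth_op_partial: "smooth_op A \<Longrightarrow> smooth_op (op_partial d A)"
  unfolding smooth_op_def
  by (auto intro: bdd_above_op_partial) (auto simp: op_partial_def intro!: smooth_partial)

lemma smooth_op_pos: "smooth_op A \<Longrightarrow> smooth_op (op_pos A)"
  unfolding smooth_op_def by (auto intro: bdd_above_op_pos) (auto simp: op_pos_def smooth_czero)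

lemma smooth_op_Lam: "smooth_op (Lam n)"
  unfolding smooth_op_def by (auto intro: bdd_above_op_Lam) (auto simp: Lam_def smooth_czero smooth_const)

lemma smooth_op_pow: "smooth_op A \<Longrightarrow> smooth_op (op_pow h A n)"
  by (induction n) (simp_all add: op_pow_def smooth_op_Lam smooth_op_mult)

lemmas smooth_op_intros = smooth_op_mult smooth_op_add smooth_op_sub smooth_op_scale
  smooth_op_partial smooth_op_pos smooth_op_Lam smooth_op_pow smooth_op_bdd_above

lemma op_pow_Suc: "op_pow h A (Suc n) = op_mult h A (op_pow h A n)"
  by (simp add: op_pow_def)

lemma op_pow_0: "op_pow h A 0 = Lam 0"
  by (simp add: op_pow_def)

lemma difference_op_mult:
  assumes A: "difference_op A" and B: "difference_op B"
  shows "difference_op (op_mult h A B)"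
  unfolding difference_op_def
proof (intro allI impI)
  fix k :: int assume "k < 0"
  then have "A i = czero \<or> B (k - i) = czero" for i
    using A B unfolding difference_op_def by (cases "i < 0") auto
  then have S: "{i. A i \<noteq> czero \<and> B (k - i) \<noteq> czero} = {}" by blast
  show "op_mult h A B k = czero"
    unfolding op_mult_def S by (simp add: czero_def)
qed

lemma difference_op_add: "difference_op A \<Longrightarrow> difference_op B \<Longrightarrow> difference_op (op_add A B)"
  by (simp add: difference_op_def op_add_def czero_def)

lemma difference_op_sub: "difference_op A \<Longrightarrow> difference_op B \<Longrightarrow> difference_op (op_sub A B)"
  by (simp add: difference_op_def op_sub_def czero_def)

lemma difference_op_scale: "difference_op A \<Longrightarrow> difference_op (op_scale c A)"
  by (simp add: difference_op_def op_scale_def czero_def)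

lemma difference_op_partial: "difference_op A \<Longrightarrow> difference_op (op_partial d A)"
  by (simp add: difference_op_def op_partial_def partial_czero)

lemma difference_op_pos: "difference_op (op_pos A)"
  by (simp add: difference_op_def op_pos_def)

lemma difference_op_Lam: "n \<ge> 0 \<Longrightarrow> difference_op (Lam n)"
  by (simp add: difference_op_def Lam_def)

lemma difference_op_pow: "difference_op A \<Longrightarrow> difference_op (op_pow h A n)"
  by (induction n) (simp_all add: op_pow_def difference_op_Lam difference_op_mult)

lemmas difference_op_intros = difference_op_mult difference_op_add difference_op_sub
  difference_op_scale difference_op_partial difference_op_pos difference_op_pow

lemma partial_op_mult:
  assumes A: "smooth_op A" and B: "smooth_op B"
  shows "op_partial d (op_mult h A B)
       = op_add (op_mult h (op_partial d A) B) (op_mult h A (op_partial d B))"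
proof (intro ext)
  fix k s t x
  let ?S = "{k - deg_bound B..deg_bound A}"
  let ?f = "\<lambda>A B i s t x. A i s t x * shift_coef (of_int i * h) (B (k - i)) s t x"
  have A': "bdd_above_op (op_partial d A)" and B': "bdd_above_op (op_partial d B)"
    using A B by (auto intro: smooth_op_intros)
  have bounds: "i > deg_bound A \<Longrightarrow> op_partial d A i = czero"
    "i > deg_bound B \<Longrightarrow> op_partial d B i = czero" for i
    using coeff_above_deg_bound[OF smooth_op_bdd_above[OF A], of i]
      coeff_above_deg_bound[OF smooth_op_bdd_above[OF B], of i]
    by (auto simp: op_partial_def partial_czero)
  have "op_mult h A B k = (\<lambda>s t x. \<Sum>i\<in>?S. ?f A B i s t x)"
    unfolding shift_coef_def by (intro ext op_mult_eq_sum_deg_bound smooth_op_bdd_above A B)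
  then have "partial d (op_mult h A B k) = (\<lambda>s t x. \<Sum>i\<in>?S. partial d (?f A B i) s t x)"
    unfolding shift_coef_def
    by (simp add: partial_sum smooth_mult smooth_shift smooth_op_coeff A B)
  also have "\<dots> = (\<lambda>s t x. \<Sum>i\<in>?S. ?f (op_partial d A) B i s t x + ?f A (op_partial d B) i s t x)"
    by (simp add: partial_mult smooth_differentiable_coef smooth_op_coeff[OF A] smooth_op_coeff[OF B]
        differentiable_coef_shift partial_shift_coef op_partial_def)
  also have "\<dots> = op_add (op_mult h (op_partial d A) B) (op_mult h A (op_partial d B)) k"
  proof (intro ext)
    fix s t x
    have "op_mult h (op_partial d A) B k s t x = (\<Sum>i\<in>?S. ?f (op_partial d A) B i s t x)"
      "op_mult h A (op_partial d B) k s t x = (\<Sum>i\<in>?S. ?f A (op_partial d B) i s t x)"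
      unfolding shift_coef_def
      by (rule op_mult_eq_sum_interval, use bounds coeff_above_deg_bound smooth_op_bdd_above A B in auto)+
    then show "(\<Sum>i\<in>?S. ?f (op_partial d A) B i s t x + ?f A (op_partial d B) i s t x)
        = op_add (op_mult h (op_partial d A) B) (op_mult h A (op_partial d B)) k s t x"
      by (simp add: op_add_def sum.distrib)
  qed
  finally show "op_partial d (op_mult h A B) k s t x
      = op_add (op_mult h (op_partial d A) B) (op_mult h A (op_partial d B)) k s t x"
    by (simp add: op_partial_def)
qed

lemma partial_Lam: "op_partial d (Lam n) = (\<lambda>_. czero)"
  unfolding op_partial_def Lam_def
  by (intro ext) (simp add: partial_const partial_czero[unfolded czero_def] czero_def)

lemma op_mult_czero_right: "op_mult h A (\<lambda>_. czero) = (\<lambda>_. czero)"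
  unfolding op_mult_def by (simp add: czero_def)

lemma partial_op_mult_Lam:
  assumes "smooth_op A"
  shows "op_partial d (op_mult h A (Lam n)) = op_mult h (op_partial d A) (Lam n)"
  using assms
  by (simp add: partial_op_mult smooth_op_Lam partial_Lam op_mult_czero_right)
    (simp add: op_add_def czero_def)

section \<open>Inverse of a dressing operator\<close>

definition smooth_dressing_op :: "pdo \<Rightarrow> bool" where
  "smooth_dressing_op U \<longleftrightarrow> dressing_op U \<and> (\<forall>k. smooth (U k))"

text \<open>The coefficient of \<open>\<Lambda>\<^sup>-\<^sup>n\<close> in \<open>U\<^sup>-\<^sup>1\<close>, solved degree by degree from \<open>(U U\<^sup>-\<^sup>1)\<^sub>-\<^sub>n = 0\<close>.\<close>

function dressing_inv_coeff :: "real \<Rightarrow> pdo \<Rightarrow> nat \<Rightarrow> coef" where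
  "dressing_inv_coeff h U n = (if n = 0 then (\<lambda>_ _ _. 1) else
     (\<lambda>s t x. - (\<Sum>i\<in>{1..n}. U (- int i) s t x * dressing_inv_coeff h U (n - i) (s - real i * h) t x)))"
  by auto
termination by (relation "Wellfounded.measure (\<lambda>(h, U, n). n)") auto

declare dressing_inv_coeff.simps [simp del]

definition dressing_inv :: "real \<Rightarrow> pdo \<Rightarrow> pdo" where
  "dressing_inv h U = (\<lambda>k. if k \<le> 0 then dressing_inv_coeff h U (nat (- k)) else czero)"

lemma smooth_dressing_op_smooth_op: "smooth_dressing_op U \<Longrightarrow> smooth_op U"
  unfolding smooth_dressing_op_def dressing_op_def smooth_op_def bdd_above_op_def by blast

lemma smooth_dressing_inv_coeff:
  assumes "smooth_dressing_op U"
  shows "smooth (dressing_inv_coeff h U n)"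
proof (induction n rule: less_induct)
  case (less n)
  have "smooth (\<lambda>s t x. - (\<Sum>i\<in>{1..n}. U (- int i) s t x * dressing_inv_coeff h U (n - i) (s + - real i * h) t x))"
    if "n \<noteq> 0"
    using that assms
    by (intro smooth_neg smooth_sum smooth_mult smooth_shift less.IH)
      (auto simp: smooth_dressing_op_def)
  then show ?case
    by (subst dressing_inv_coeff.simps) (simp add: smooth_const)
qed

lemma smooth_dressing_op_inv: "smooth_dressing_op U \<Longrightarrow> smooth_dressing_op (dressing_inv h U)"
  by (simp add: smooth_dressing_op_def dressing_op_def dressing_inv_def smooth_dressing_inv_coeff
      smooth_czero dressing_inv_coeff.simps[of h U 0])

lemma sum_atLeastAtMost_neg_int: "(\<Sum>i\<in>{- int n..0}. f i) = (\<Sum>j\<in>{0..n}. f (- int j))"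
  by (rule sum.reindex_bij_witness[of _ "\<lambda>j. - int j" "\<lambda>i. nat (- i)"]) auto

lemma op_mult_dressing_inv_right:
  assumes U: "smooth_dressing_op U"
  shows "op_mult h U (dressing_inv h U) = Lam 0"
proof (intro ext)
  fix k s t x
  let ?V = "dressing_inv h U"
  have above: "U i = czero" "?V i = czero" if "i > 0" for i
    using U that by (auto simp: smooth_dressing_op_def dressing_op_def dressing_inv_def)
  show "op_mult h U ?V k s t x = Lam 0 k s t x"
  proof (cases "k > 0")
    case True
    have "op_mult h U ?V k s t x = (\<Sum>i\<in>{k..0}. U i s t x * ?V (k - i) (s + of_int i * h) t x)"
      by (rule op_mult_eq_sum_interval[of 0 _ 0]) (use above in auto)
    then show ?thesis using True by (simp add: Lam_def czero_def)
  next
    case False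
    then obtain n where n: "k = - int n" by (metis minus_minus nat_0_le neg_0_le_iff_le not_less)
    have "op_mult h U ?V k s t x = (\<Sum>i\<in>{- int n..0}. U i s t x * ?V (k - i) (s + of_int i * h) t x)"
      by (rule op_mult_eq_sum_interval[of 0 _ 0]) (use above n in auto)
    also have "\<dots> = (\<Sum>j\<in>{0..n}. U (- int j) s t x * dressing_inv_coeff h U (n - j) (s - real j * h) t x)"
      unfolding sum_atLeastAtMost_neg_int using n
      by (intro sum.cong) (auto simp: dressing_inv_def nat_diff_distrib)
    also have "\<dots> = U 0 s t x * dressing_inv_coeff h U n s t x
        + (\<Sum>j\<in>{1..n}. U (- int j) s t x * dressing_inv_coeff h U (n - j) (s - real j * h) t x)"
      by (simp add: sum.atLeast_Suc_atMost)
    also have "\<dots> = Lam 0 k s t x"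
      using U n by (subst dressing_inv_coeff.simps)
        (auto simp: smooth_dressing_op_def dressing_op_def Lam_def dressing_inv_coeff.simps[of h U 0] czero_def)
    finally show ?thesis .
  qed
qed

lemma left_inverse_eq_right_inverse:
  assumes "bdd_above_op U" "bdd_above_op V" "bdd_above_op B"
    and "op_mult h U V = Lam 0" "op_mult h B U = Lam 0"
  shows "B = V"
proof -
  have "B = op_mult h B (op_mult h U V)" using assms(4) by simp
  also have "\<dots> = op_mult h (op_mult h B U) V" by (rule op_mult_assoc[symmetric]) (use assms in auto)
  also have "\<dots> = V" using assms(5) by simp
  finally show ?thesis .
qed

lemma op_mult_dressing_inv_left:
  assumes U: "smooth_dressing_op U"
  shows "op_mult h (dressing_inv h U) U = Lam 0"
proof -
  let ?V = "dressing_inv h U"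
  have V: "smooth_dressing_op ?V" by (rule smooth_dressing_op_inv[OF U])
  have "dressing_inv h ?V = U"
    by (rule sym, rule left_inverse_eq_right_inverse[where U = ?V and h = h])
      (auto intro: smooth_op_bdd_above smooth_dressing_op_smooth_op U V smooth_dressing_op_inv
        simp: op_mult_dressing_inv_right[OF U] op_mult_dressing_inv_right[OF V])
  then show ?thesis
    using op_mult_dressing_inv_right[OF V, of h] by simp
qed

lemma inv_above_eq_dressing_inv:
  assumes U: "smooth_dressing_op U"
  shows "inv_above h U = dressing_inv h U"
  unfolding inv_above_def
proof (rule the_equality)
  have bdd: "bdd_above_op U" "bdd_above_op (dressing_inv h U)"
    using U smooth_dressing_op_inv[OF U] by (auto intro: smooth_op_bdd_above smooth_dressing_op_smooth_op)
  then show "bdd_above_op (dressing_inv h U) \<and> op_mult h U (dressing_inv h U) = Lam 0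
      \<and> op_mult h (dressing_inv h U) U = Lam 0"
    using U by (simp add: op_mult_dressing_inv_right op_mult_dressing_inv_left)
  show "B = dressing_inv h U" if "bdd_above_op B \<and> op_mult h U B = Lam 0 \<and> op_mult h B U = Lam 0" for B
    using left_inverse_eq_right_inverse[where U = U and V = "dressing_inv h U" and B = B and h = h]
      that bdd U by (simp add: op_mult_dressing_inv_right)
qed

section \<open>Adjoint operators and the dual wave function\<close>

lemma adj_eq_czero_iff: "adj h A k = czero \<longleftrightarrow> A (- k) = czero"
proof
  assume "adj h A k = czero"
  then have "adj h A k (s - of_int k * h) t x = 0" for s t x by (simp add: czero_def)
  then show "A (- k) = czero" by (intro ext) (simp add: adj_def czero_def)
qed (simp add: adj_def czero_def)

lemma adj_op_mult: "adj h (op_mult h A B) = op_mult h (adj h B) (adj h A)"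
proof (intro ext)
  fix k s t x
  have "adj h (op_mult h A B) k s t x
      = (\<Sum>i | A i \<noteq> czero \<and> B (- k - i) \<noteq> czero.
          A i (s + of_int k * h) t x * B (- k - i) (s + of_int k * h + of_int i * h) t x)"
    by (simp add: adj_def op_mult_def)
  also have "\<dots> = (\<Sum>j | adj h B j \<noteq> czero \<and> adj h A (k - j) \<noteq> czero.
          adj h B j s t x * adj h A (k - j) (s + of_int j * h) t x)"
  proof (rule sum.reindex_bij_witness[of _ "\<lambda>j. j - k" "\<lambda>i. i + k"])
    fix i
    have e: "- i - k = - k - i" by simp
    show "adj h B (i + k) s t x * adj h A (k - (i + k)) (s + of_int (i + k) * h) t x
        = A i (s + of_int k * h) t x * B (- k - i) (s + of_int k * h + of_int i * h) t x"
      by (simp add: adj_def algebra_simps) (metis e)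
  qed (simp_all add: adj_eq_czero_iff minus_diff_commute)
  also have "\<dots> = op_mult h (adj h B) (adj h A) k s t x"
    by (simp add: op_mult_def)
  finally show "adj h (op_mult h A B) k s t x = op_mult h (adj h B) (adj h A) k s t x" .
qed

lemma adj_adj [simp]: "adj h (adj h A) = A"
  by (intro ext) (simp add: adj_def algebra_simps)

lemma adj_Lam0 [simp]: "adj h (Lam 0) = Lam 0"
  by (intro ext) (simp add: adj_def Lam_def czero_def)

lemma bdd_below_op_adj: "bdd_above_op A \<Longrightarrow> bdd_below_op (adj h A)"
proof -
  assume "bdd_above_op A"
  then obtain M where "\<forall>k>M. A k = czero" unfolding bdd_above_op_def by blast
  then have "\<forall>k < - M. adj h A k = czero" by (simp add: adj_eq_czero_iff)
  then show ?thesis unfolding bdd_below_op_def by blast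
qed

lemma bdd_above_op_adj: "bdd_below_op B \<Longrightarrow> bdd_above_op (adj h B)"
proof -
  assume "bdd_below_op B"
  then obtain M where "\<forall>k<M. B k = czero" unfolding bdd_below_op_def by blast
  then have "\<forall>k > - M. adj h B k = czero" by (simp add: adj_eq_czero_iff)
  then show ?thesis unfolding bdd_above_op_def by blast
qed

lemma inv_below_adj:
  assumes U: "smooth_dressing_op U"
  shows "inv_below h (adj h U) = adj h (dressing_inv h U)"
  unfolding inv_below_def
proof (rule the_equality)
  let ?V = "dressing_inv h U"
  have bdd: "bdd_above_op U" "bdd_above_op ?V"
    using U smooth_dressing_op_inv[OF U] by (auto intro: smooth_op_bdd_above smooth_dressing_op_smooth_op)
  show "bdd_below_op (adj h ?V) \<and> op_mult h (adj h U) (adj h ?V) = Lam 0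
      \<and> op_mult h (adj h ?V) (adj h U) = Lam 0"
    using U bdd by (simp add: bdd_below_op_adj adj_op_mult[symmetric] op_mult_dressing_inv_right
        op_mult_dressing_inv_left)
  fix B assume B: "bdd_below_op B \<and> op_mult h (adj h U) B = Lam 0 \<and> op_mult h B (adj h U) = Lam 0"
  then have "op_mult h U (adj h B) = Lam 0" "op_mult h (adj h B) U = Lam 0"
    by (metis adj_Lam0 adj_adj adj_op_mult)+
  then have "adj h B = ?V"
    using left_inverse_eq_right_inverse[of U ?V "adj h B" h] bdd B
    by (simp add: bdd_above_op_adj op_mult_dressing_inv_right[OF U])
  then show "B = adj h ?V" by (metis adj_adj)
qed

text \<open>Since \<open>(W\<^sup>*)\<^sup>-\<^sup>1 = (W\<^sup>-\<^sup>1)\<^sup>*\<close>, the dual wave function has the coefficients of \<open>W\<^sup>-\<^sup>1\<close>,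
  evaluated at shifted points.\<close>

definition dual_series :: "real \<Rightarrow> pdo \<Rightarrow> int \<Rightarrow> coef" where
  "dual_series h U = (\<lambda>j s t x. U j (s - (of_int j + 1) * h) t x)"

lemma dual_wave_series_eq:
  assumes "smooth_dressing_op W"
  shows "dual_wave_series h W = dual_series h (dressing_inv h W)"
  unfolding dual_wave_series_def dual_coeffs_def op_mult_Lam_right inv_below_adj[OF assms]
  by (intro ext) (simp add: op_mult_Lam_left adj_def dual_series_def algebra_simps)

lemma fold_invariant:
  assumes "set ks \<subseteq> A" "\<And>k F. k \<in> A \<Longrightarrow> P F \<Longrightarrow> P (f k F)" "P F"
  shows "P (fold f ks F)"
  using assms by (induction ks arbitrary: F) auto

section \<open>Taylor derivatives and residues in operator form\<close>

lemma d_alpha_eq_op: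
  "d_alpha N k F = op_sub (op_partial (DX k) F) (op_mult h (op_partial DS F) (Lam (int (N * k))))"
  by (intro ext) (simp add: d_alpha_def op_sub_def op_partial_def op_mult_Lam_right)

lemma partial_shift_minus: "partial d (\<lambda>s t x. f (s - c) t x) = (\<lambda>s t x. partial d f (s - c) t x)"
  using partial_shift_coef[of d "- c" f] by (simp add: shift_coef_def)

lemma d_y_dual_series:
  "d_y h k (dual_series h U)
     = dual_series h (op_sub (op_partial (DT k) U) (op_scale (1 / h) (op_mult h (Lam (int k)) U)))"
  unfolding d_y_def dual_series_def partial_shift_minus
  by (intro ext) (simp add: op_sub_def op_scale_def op_partial_def op_mult_Lam_left algebra_simps)

lemma d_alpha_dual_series:
  "d_alpha N k (dual_series h U)
     = dual_series h (op_sub (op_partial (DX k) U) (op_mult h (Lam (int (N * k))) (op_partial DS U)))"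
  unfolding d_alpha_def dual_series_def partial_shift_minus
  by (intro ext) (simp add: op_sub_def op_partial_def op_mult_Lam_left algebra_simps)

text \<open>Since \<open>s' = s - l\<hbar>\<close>, the shifts in the dual series are exactly those of the operator
  product, so the residue pairing becomes a coefficient of \<open>A \<Lambda>\<^sup>n U\<close>.\<close>

lemma res_prod_dual_series:
  assumes A: "bdd_above_op A" and U: "bdd_above_op U" and s': "s' = s - real l * h"
  shows "res_prod (n + int l) (\<lambda>j. A j s t x) (\<lambda>j. dual_series h U j s' t x)
       = op_mult h (op_mult h A (Lam n)) U (- 1 - int l) s t x"
proof -
  let ?c = "n + int l"
  define g where "g i = A i s t x * dual_series h U (- 1 - ?c - i) s' t x" for i
  have support: "{i. g i \<noteq> 0} \<subseteq> {- 1 - ?c - deg_bound U..deg_bound A}"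
    using op_mult_support_subset[OF A U, of s t x "- 1 - ?c" "\<lambda>i. s' - (of_int (- 1 - ?c - i) + 1) * h"]
    by (simp add: g_def dual_series_def)
  have "res_prod ?c (\<lambda>j. A j s t x) (\<lambda>j. dual_series h U j s' t x) = Sum_any g"
    unfolding res_prod_def g_def
    by (rule Sum_any.expand_superset[symmetric]) (use support in \<open>auto simp: g_def\<close>, meson finite_atLeastAtMost_int finite_subset)
  also have "\<dots> = Sum_any (\<lambda>j. A (j - n) s t x * U (- 1 - int l - j) (s + of_int j * h) t x)"
    using bij_plus_right[of "- n"]
    by (intro Sum_any.reindex_cong[of "\<lambda>j. j - n"]) (auto simp: g_def dual_series_def s' algebra_simps)
  also have "\<dots> = op_mult h (op_mult h A (Lam n)) U (- 1 - int l) s t x"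
    by (subst op_mult_eq_Sum_any) (auto simp: op_mult_Lam_right intro: bdd_above_op_mult A U bdd_above_op_Lam)
  finally show ?thesis .
qed

section \<open>Dressing operators of the lattice Gelfand--Dickey hierarchy\<close>

context
  fixes h :: real and N :: nat and W :: pdo
  assumes h_nonzero: "h \<noteq> 0" and solution: "lattice_GD_solution h N W"
begin

abbreviation "V \<equiv> dressing_inv h W"
abbreviation "L \<equiv> GD_L h N W"
abbreviation "Lk k \<equiv> op_pow h L k"
abbreviation "Bk k \<equiv> GD_B h k W"
abbreviation "Pk k \<equiv> GD_P h N k W"

lemma smooth_dressing_op_W: "smooth_dressing_op W"
  using solution unfolding lattice_GD_solution_def smooth_dressing_op_def by blast

lemma smooth_op_W: "smooth_op W"
  by (rule smooth_dressing_op_smooth_op[OF smooth_dressing_op_W])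

lemma smooth_op_V: "smooth_op V"
  by (intro smooth_dressing_op_smooth_op smooth_dressing_op_inv smooth_dressing_op_W)

lemma W_V: "op_mult h W V = Lam 0"
  by (rule op_mult_dressing_inv_right[OF smooth_dressing_op_W])

lemma V_W: "op_mult h V W = Lam 0"
  by (rule op_mult_dressing_inv_left[OF smooth_dressing_op_W])

lemma inv_above_W: "inv_above h W = V"
  by (rule inv_above_eq_dressing_inv[OF smooth_dressing_op_W])

lemma L_eq: "L = op_mult h (op_mult h W (Lam (int N))) V"
  by (simp add: GD_L_def inv_above_W)

lemma smooth_op_L: "smooth_op L"
  unfolding L_eq by (intro smooth_op_intros smooth_op_W smooth_op_V)

lemma difference_op_L: "difference_op L"
  using solution unfolding lattice_GD_solution_def difference_op_def by blast

lemma smooth_op_Lk: "smooth_op (Lk k)"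
  by (rule smooth_op_pow[OF smooth_op_L])

lemma difference_op_Lk: "difference_op (Lk k)"
  by (rule difference_op_pow[OF difference_op_L])

lemma smooth_op_B: "smooth_op (Bk k)"
  unfolding GD_B_def inv_above_W by (intro smooth_op_intros smooth_op_W smooth_op_V)

lemma difference_op_B: "difference_op (Bk k)"
  unfolding GD_B_def by (rule difference_op_pos)

lemma smooth_op_P: "smooth_op (Pk k)"
  unfolding GD_P_def inv_above_W by (intro smooth_op_intros smooth_op_W smooth_op_V smooth_op_Lk)

lemma difference_op_P: "difference_op (Pk k)"
  unfolding GD_P_def by (intro difference_op_scale difference_op_pos)

lemmas smooth_ops = smooth_op_W smooth_op_V smooth_op_L smooth_op_Lk smooth_op_B smooth_op_P

lemma Lk_W: "op_mult h (Lk k) W = op_mult h W (Lam (int (N * k)))"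
proof (induction k)
  case (Suc k)
  have "op_mult h (Lk (Suc k)) W = op_mult h L (op_mult h W (Lam (int (N * k))))"
    unfolding op_pow_Suc Suc[symmetric] by (rule op_mult_assoc) (auto intro!: smooth_op_intros smooth_ops)
  also have "\<dots> = op_mult h (op_mult h W (Lam (int N))) (op_mult h (op_mult h V W) (Lam (int (N * k))))"
    unfolding L_eq by (simp add: op_mult_assoc smooth_op_intros smooth_ops)
  also have "\<dots> = op_mult h W (Lam (int (N * Suc k)))"
    by (simp add: V_W op_mult_assoc op_mult_Lam_Lam smooth_op_intros smooth_ops)
  finally show ?case .
qed (simp add: op_pow_0)

lemma V_Lk: "op_mult h V (Lk k) = op_mult h (Lam (int (N * k))) V"
proof -
  have "op_mult h (Lam (int (N * k))) V = op_mult h (op_mult h (op_mult h V W) (Lam (int (N * k)))) V"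
    by (simp add: V_W)
  also have "\<dots> = op_mult h (op_mult h V (op_mult h (Lk k) W)) V"
    by (subst op_mult_assoc) (auto simp: Lk_W intro!: smooth_op_intros smooth_ops)
  also have "\<dots> = op_mult h (op_mult h (op_mult h V (Lk k)) W) V"
    by (subst op_mult_assoc) (auto intro!: smooth_op_intros smooth_ops)
  also have "\<dots> = op_mult h V (Lk k)"
    by (subst op_mult_assoc) (auto simp: W_V intro!: smooth_op_intros smooth_ops)
  finally show ?thesis ..
qed

lemma partial_t_W:
  "k \<ge> 1 \<Longrightarrow> op_partial (DT k) W
     = op_scale (1 / h) (op_sub (op_mult h (Bk k) W) (op_mult h W (Lam (int k))))"
  using solution h_nonzero unfolding lattice_GD_solution_def by (simp add: op_scale_eq_iff)

lemma partial_x_W: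
  assumes "k \<ge> 1"
  shows "op_partial (DX k) W
     = op_add (op_mult h (Lk k) (op_partial DS W)) (op_scale (1 / h) (op_mult h (Pk k) W))"
proof -
  have "op_scale h (op_partial (DX k) W)
      = op_add (op_scale h (op_mult h (Lk k) (op_partial DS W))) (op_mult h (Pk k) W)"
    using solution assms unfolding lattice_GD_solution_def
    by (simp add: op_mult_scale_right smooth_op_intros smooth_ops)
  then show ?thesis
    using h_nonzero
    by (simp add: op_scale_eq_iff) (simp add: op_scale_def op_add_def fun_eq_iff field_simps)
qed

lemma partial_V: "op_partial d V = op_scale (-1) (op_mult h (op_mult h V (op_partial d W)) V)"
proof -
  have "op_add (op_mult h (op_partial d V) W) (op_mult h V (op_partial d W)) = op_partial d (Lam 0)"
    unfolding V_W[symmetric] by (rule partial_op_mult[symmetric]) (auto intro!: smooth_op_intros smooth_ops)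
  then have "op_mult h (op_partial d V) W = op_scale (-1) (op_mult h V (op_partial d W))"
    by (auto simp: partial_Lam op_add_def op_scale_def czero_def fun_eq_iff add_eq_0_iff)
  then have "op_mult h (op_mult h (op_partial d V) W) V = op_scale (-1) (op_mult h (op_mult h V (op_partial d W)) V)"
    by (simp add: op_mult_scale_left smooth_op_intros smooth_ops)
  then show ?thesis
    by (simp add: op_mult_assoc W_V smooth_op_intros smooth_ops)
qed

lemma W_V_cancel: "bdd_above_op X \<Longrightarrow> op_mult h W (op_mult h V X) = X"
  by (simp add: op_mult_assoc[symmetric] W_V smooth_op_intros smooth_ops)

lemma V_W_cancel: "bdd_above_op X \<Longrightarrow> op_mult h V (op_mult h W X) = X"
  by (simp add: op_mult_assoc[symmetric] V_W smooth_op_intros smooth_ops)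

lemma partial_x_wave:
  assumes "k \<ge> 1" "smooth_op Q"
  shows "op_partial (DX k) (op_mult h Q W)
    = op_add (op_mult h (op_partial (DX k) Q) W)
        (op_add (op_mult h Q (op_mult h (Lk k) (op_partial DS W)))
          (op_scale (1 / h) (op_mult h Q (op_mult h (Pk k) W))))"
  using assms
  by (simp add: partial_op_mult partial_x_W op_mult_add_right op_mult_scale_right
      smooth_op_intros smooth_ops)

lemma partial_s_wave_Lam:
  assumes "smooth_op Q"
  shows "op_mult h (op_partial DS (op_mult h Q W)) (Lam (int (N * k)))
    = op_add (op_mult h (op_partial DS Q) (op_mult h (Lk k) W))
        (op_add (op_mult h Q (op_mult h (op_partial DS (Lk k)) W))
          (op_mult h Q (op_mult h (Lk k) (op_partial DS W))))"
proof -
  have W_Lam: "op_mult h W (Lam (int (N * k))) = op_mult h (Lk k) W"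
    by (simp add: Lk_W)
  have "op_mult h (op_partial DS W) (Lam (int (N * k))) = op_partial DS (op_mult h (Lk k) W)"
    by (simp add: partial_op_mult_Lam[symmetric] smooth_op_W W_Lam del: of_nat_mult)
  then have Ws_Lam: "op_mult h (op_partial DS W) (Lam (int (N * k)))
      = op_add (op_mult h (op_partial DS (Lk k)) W) (op_mult h (Lk k) (op_partial DS W))"
    by (simp add: partial_op_mult smooth_ops)
  show ?thesis
    using assms
    by (simp add: partial_op_mult op_mult_add_left op_mult_add_right op_mult_assoc W_Lam Ws_Lam
        smooth_op_intros smooth_ops del: of_nat_mult)
qed

lemma wave_step:
  assumes k: "k \<ge> 1" and Q: "smooth_op Q" "difference_op Q"
  shows "\<exists>Q'. smooth_op Q' \<and> difference_op Q' \<and> d_alpha N k (op_mult h Q W) = op_mult h Q' W"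
proof (intro exI conjI)
  let ?Q' = "op_sub (op_sub (op_add (op_partial (DX k) Q) (op_scale (1 / h) (op_mult h Q (Pk k))))
      (op_mult h (op_partial DS Q) (Lk k))) (op_mult h Q (op_partial DS (Lk k)))"
  show "smooth_op ?Q'"
    using Q by (intro smooth_op_intros smooth_ops)
  show "difference_op ?Q'"
    using Q by (intro difference_op_intros difference_op_P difference_op_Lk)
  have "op_mult h ?Q' W = op_sub (op_sub (op_add (op_mult h (op_partial (DX k) Q) W)
      (op_scale (1 / h) (op_mult h Q (op_mult h (Pk k) W))))
      (op_mult h (op_partial DS Q) (op_mult h (Lk k) W))) (op_mult h Q (op_mult h (op_partial DS (Lk k)) W))"
    using Q by (simp add: op_mult_sub_left op_mult_add_left op_mult_scale_left op_mult_assoc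
        smooth_op_intros smooth_ops)
  then show "d_alpha N k (op_mult h Q W) = op_mult h ?Q' W"
    unfolding d_alpha_eq_op[where h = h] partial_x_wave[OF k Q(1)] partial_s_wave_Lam[OF Q(1)]
    by (simp add: op_sub_def op_add_def op_scale_def fun_eq_iff algebra_simps)
qed

lemma partial_t_V:
  assumes "k \<ge> 1"
  shows "op_partial (DT k) V
    = op_scale (1 / h) (op_sub (op_mult h (Lam (int k)) V) (op_mult h V (Bk k)))"
proof -
  have "op_mult h (op_mult h V (op_partial (DT k) W)) V
      = op_scale (1 / h) (op_sub (op_mult h V (Bk k)) (op_mult h (Lam (int k)) V))"
    using assms
    by (simp add: partial_t_W op_mult_scale_right op_mult_scale_left op_mult_sub_right op_mult_sub_left
        op_mult_assoc W_V V_W_cancel smooth_op_intros smooth_ops)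
  then show ?thesis
    by (simp add: partial_V op_scale_def op_sub_def fun_eq_iff algebra_simps)
qed

lemma dual_y_step:
  assumes k: "k \<ge> 1" and R: "smooth_op R" "difference_op R"
  shows "\<exists>R'. smooth_op R' \<and> difference_op R'
    \<and> d_y h k (dual_series h (op_mult h V R)) = dual_series h (op_mult h V R')"
proof (intro exI conjI)
  let ?R' = "op_sub (op_partial (DT k) R) (op_scale (1 / h) (op_mult h (Bk k) R))"
  show "smooth_op ?R'"
    using R by (intro smooth_op_intros smooth_ops)
  show "difference_op ?R'"
    using R by (intro difference_op_intros difference_op_B)
  have "op_sub (op_partial (DT k) (op_mult h V R)) (op_scale (1 / h) (op_mult h (Lam (int k)) (op_mult h V R)))
      = op_mult h V ?R'"
    using k R
    by (simp add: partial_op_mult partial_t_V op_mult_scale_left op_mult_scale_right op_mult_sub_left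
        op_mult_sub_right op_mult_assoc smooth_op_intros smooth_ops)
      (simp add: op_sub_def op_add_def op_scale_def fun_eq_iff algebra_simps)
  then show "d_y h k (dual_series h (op_mult h V R)) = dual_series h (op_mult h V ?R')"
    by (simp add: d_y_dual_series)
qed

lemma partial_x_V:
  assumes "k \<ge> 1"
  shows "op_partial (DX k) V
    = op_scale (-1) (op_add (op_mult h V (op_mult h (Lk k) (op_mult h (op_partial DS W) V)))
        (op_scale (1 / h) (op_mult h V (Pk k))))"
  using assms
  by (simp add: partial_V partial_x_W op_mult_scale_right op_mult_scale_left op_mult_add_right
      op_mult_add_left op_mult_assoc W_V smooth_op_intros smooth_ops)

lemma Lam_partial_s_V:
  "op_mult h (Lam (int (N * k))) (op_partial DS V)
    = op_scale (-1) (op_mult h V (op_mult h (Lk k) (op_mult h (op_partial DS W) V)))"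
proof -
  have "op_mult h (Lam (int (N * k))) (op_partial DS V)
      = op_scale (-1) (op_mult h (op_mult h (Lam (int (N * k))) V) (op_mult h (op_partial DS W) V))"
    by (simp add: partial_V op_mult_scale_right op_mult_assoc smooth_op_intros smooth_ops del: of_nat_mult)
  then show ?thesis
    by (simp add: V_Lk[symmetric] op_mult_assoc smooth_op_intros smooth_ops del: of_nat_mult)
qed

lemma dual_alpha_step:
  assumes k: "k \<ge> 1" and R: "smooth_op R" "difference_op R"
  shows "\<exists>R'. smooth_op R' \<and> difference_op R'
    \<and> d_alpha N k (dual_series h (op_mult h V R)) = dual_series h (op_mult h V R')"
proof (intro exI conjI)
  let ?R' = "op_sub (op_sub (op_partial (DX k) R) (op_scale (1 / h) (op_mult h (Pk k) R)))
    (op_mult h (Lk k) (op_partial DS R))"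
  let ?T = "op_mult h V (op_mult h (Lk k) (op_mult h (op_partial DS W) (op_mult h V R)))"
  show "smooth_op ?R'"
    using R by (intro smooth_op_intros smooth_ops)
  show "difference_op ?R'"
    using R by (intro difference_op_intros difference_op_P difference_op_Lk)
  have x: "op_partial (DX k) (op_mult h V R) = op_add (op_scale (-1) (op_add ?T
      (op_scale (1 / h) (op_mult h V (op_mult h (Pk k) R))))) (op_mult h V (op_partial (DX k) R))"
    using k R
    by (simp add: partial_op_mult partial_x_V op_mult_scale_left op_mult_add_left op_mult_assoc
        smooth_op_intros smooth_ops)
  have "op_mult h (Lam (int (N * k))) (op_partial DS (op_mult h V R))
      = op_add (op_mult h (op_mult h (Lam (int (N * k))) (op_partial DS V)) R)
          (op_mult h (op_mult h V (Lk k)) (op_partial DS R))"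
    using R
    by (simp add: partial_op_mult op_mult_add_right op_mult_assoc[symmetric] V_Lk
        smooth_op_intros smooth_ops del: of_nat_mult)
  then have s: "op_mult h (Lam (int (N * k))) (op_partial DS (op_mult h V R))
      = op_add (op_scale (-1) ?T) (op_mult h V (op_mult h (Lk k) (op_partial DS R)))"
    using R
    by (simp add: Lam_partial_s_V op_mult_scale_left op_mult_assoc smooth_op_intros smooth_ops
        del: of_nat_mult)
  have VR': "op_mult h V ?R' = op_sub (op_sub (op_mult h V (op_partial (DX k) R))
      (op_scale (1 / h) (op_mult h V (op_mult h (Pk k) R)))) (op_mult h V (op_mult h (Lk k) (op_partial DS R)))"
    using R
    by (simp add: op_mult_sub_right op_mult_scale_right smooth_op_intros smooth_ops)
  show "d_alpha N k (dual_series h (op_mult h V R)) = dual_series h (op_mult h V ?R')"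
    unfolding d_alpha_dual_series x s VR'
    by (intro arg_cong[where f = "dual_series h"]) (simp add: op_sub_def op_add_def op_scale_def fun_eq_iff algebra_simps)
qed

lemma wave_series_derivatives:
  assumes "set as \<subseteq> {1..}"
  shows "\<exists>Q. smooth_op Q \<and> difference_op Q \<and> fold (d_alpha N) as (wave_series W) = op_mult h Q W"
proof (rule fold_invariant[where P = "\<lambda>F. \<exists>Q. smooth_op Q \<and> difference_op Q \<and> F = op_mult h Q W", OF assms])
  show "\<exists>Q. smooth_op Q \<and> difference_op Q \<and> wave_series W = op_mult h Q W"
    by (intro exI[of _ "Lam 0"]) (simp add: smooth_op_Lam difference_op_Lam wave_series_def)
qed (use wave_step in blast)

lemma dual_wave_series_derivatives:
  assumes "set bs \<subseteq> {1..}" "set ys \<subseteq> {1..}"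
  shows "\<exists>R. smooth_op R \<and> difference_op R
    \<and> fold (d_y h) ys (fold (d_alpha N) bs (dual_wave_series h W)) = dual_series h (op_mult h V R)"
proof (rule fold_invariant[where P = "\<lambda>F. \<exists>R. smooth_op R \<and> difference_op R
    \<and> F = dual_series h (op_mult h V R)", OF assms(2)])
  show "\<exists>R. smooth_op R \<and> difference_op R
      \<and> fold (d_alpha N) bs (dual_wave_series h W) = dual_series h (op_mult h V R)"
  proof (rule fold_invariant[where P = "\<lambda>F. \<exists>R. smooth_op R \<and> difference_op R
      \<and> F = dual_series h (op_mult h V R)", OF assms(1)])
    show "\<exists>R. smooth_op R \<and> difference_op R \<and> dual_wave_series h W = dual_series h (op_mult h V R)"
      by (intro exI[of _ "Lam 0"])
        (simp add: smooth_op_Lam difference_op_Lam dual_wave_series_eq smooth_dressing_op_W)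
  qed (use dual_alpha_step in blast)
qed (use dual_y_step in blast)

lemma wave_Lam_dual_product:
  assumes "bdd_above_op Q" "bdd_above_op R"
  shows "op_mult h (op_mult h (op_mult h Q W) (Lam (int (m * N)))) (op_mult h V R)
    = op_mult h Q (op_mult h (Lk m) R)"
proof -
  have "op_mult h (op_mult h Q W) (Lam (int (m * N))) = op_mult h Q (op_mult h (Lk m) W)"
    using assms by (simp add: Lk_W op_mult_assoc mult.commute smooth_op_intros smooth_ops)
  then show ?thesis
    using assms by (simp add: op_mult_assoc W_V_cancel bdd_above_op_mult smooth_op_intros smooth_ops)
qed

end

theorem proposition1:
  fixes h :: real and N m :: nat and W :: pdo
  assumes "h \<noteq> 0" and "N \<ge> 1"
    and "lattice_GD_solution h N W"
  shows "\<forall>as bs ys :: nat list. \<forall>s s' :: real. \<forall>t x :: nat \<Rightarrow> real. \<forall>l :: nat.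
     set as \<subseteq> {1..} \<and> set bs \<subseteq> {1..} \<and> set ys \<subseteq> {1..} \<and> s - s' = real l * h \<longrightarrow>
     res_prod (int (m * N) + int l)
       (\<lambda>j. fold (d_alpha N) as (wave_series W) j s t x)
       (\<lambda>j. fold (d_y h) ys (fold (d_alpha N) bs (dual_wave_series h W)) j s' t x) = 0"
proof (intro allI impI)
  fix as bs ys :: "nat list" and s s' :: real and t x :: "nat \<Rightarrow> real" and l :: nat
  assume lists: "set as \<subseteq> {1..} \<and> set bs \<subseteq> {1..} \<and> set ys \<subseteq> {1..} \<and> s - s' = real l * h"
  note solution = assms(1,3)
  obtain Q where Q: "smooth_op Q" "difference_op Q"
    and wave: "fold (d_alpha N) as (wave_series W) = op_mult h Q W"
    using wave_series_derivatives[OF solution, of as] lists by blast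
  obtain R where R: "smooth_op R" "difference_op R"
    and dual: "fold (d_y h) ys (fold (d_alpha N) bs (dual_wave_series h W))
      = dual_series h (op_mult h (dressing_inv h W) R)"
    using dual_wave_series_derivatives[OF solution, of bs ys] lists by blast
  have "res_prod (int (m * N) + int l) (\<lambda>j. op_mult h Q W j s t x)
      (\<lambda>j. dual_series h (op_mult h (dressing_inv h W) R) j s' t x)
    = op_mult h Q (op_mult h (op_pow h (GD_L h N W) m) R) (- 1 - int l) s t x"
    using lists Q R
    by (simp add: res_prod_dual_series wave_Lam_dual_product[OF solution] smooth_op_intros
        smooth_op_W[OF solution] smooth_op_V[OF solution] del: of_nat_mult)
  also have "\<dots> = 0"
    using difference_op_mult[OF Q(2) difference_op_mult[OF difference_op_Lk[OF solution] R(2)]]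
    by (simp add: difference_op_def czero_def)
  finally show "res_prod (int (m * N) + int l)
       (\<lambda>j. fold (d_alpha N) as (wave_series W) j s t x)
       (\<lambda>j. fold (d_y h) ys (fold (d_alpha N) bs (dual_wave_series h W)) j s' t x) = 0"
    unfolding wave dual .
qed

end
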